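(* Let $y\in W^{1,1}_{\mathrm{loc}}([0,\infty);\mathbb{R})$ with $y\ge0$ on $[0,\infty)$, $\delta\in(0,1)$, $\alpha>0$, $T_0>0$, and set $$y_\star=\big(\alpha\,\delta^\delta(1-\delta)\big)^{\frac1{1-\delta}},\qquad x_\star=\big(\alpha\,\delta(1-\delta)T_0\big)^{\frac1{1-\delta}}.$$ If $y(0)\le x_\star$ and if for almost every $t>0$, $$y'(t)+\alpha y(t)^\delta\le y_\star(T_0-t)_+^{\frac{\delta}{1-\delta}},$$ then $y(t)=0$ for every $t\ge T_0$.
   Context: $x_+=\max\{x,0\}$. *)

theory Defs
  imports "HOL-Analysis.Analysis"
begin

text \<open>y belongs to W^{1,1}_loc([0,oo)) (continuous representative) with weak derivative g:
  g is Lebesgue integrable on every bounded interval [0,t] and y is the primitive of g.\<close>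
definition W11_loc_deriv :: "(real \<Rightarrow> real) \<Rightarrow> (real \<Rightarrow> real) \<Rightarrow> bool" where
  "W11_loc_deriv y g \<longleftrightarrow>
     (\<forall>t\<ge>0. set_integrable lborel {0..t} g \<and>
             y t = y 0 + (LINT s:{0..t}|lborel. g s))"

end

theory Submission
  imports Defs
begin

text \<open>The barrier z(t) = (\<alpha> \<delta> (1 - \<delta>) (T0 - t))^(1/(1-\<delta>)) solves
  z' + \<alpha> z^\<delta> = y_star (T0 - t)^(\<delta>/(1-\<delta>)) exactly on [0, T0], with z(0) = x_star and
  z(T0) = 0. Since the absorption term \<alpha> y^\<delta> is monotone, a comparison argument at the last
  time where y \<le> z gives y \<le> z on [0, T0], hence y(T0) = 0. Beyond T0 the right-hand side
  vanishes, so y is nonincreasing there and, being nonnegative, stays at 0.\<close>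

lemma W11_loc_deriv_set_integrable:
  assumes "W11_loc_deriv y g" "0 \<le> s"
  shows "set_integrable lborel {s..t} g"
proof (cases "s \<le> t")
  case True
  have "set_integrable lborel {0..t} g"
    using assms True unfolding W11_loc_deriv_def by auto
  then show ?thesis by (rule set_integrable_subset) (use assms in auto)
qed (simp add: set_integrable_def)

lemma W11_loc_deriv_eq_integral:
  assumes W: "W11_loc_deriv y g" and "0 \<le> t"
  shows "y t = y 0 + integral {0..t} g"
proof -
  have "y t = y 0 + (LINT s:{0..t}|lborel. g s)"
    using assms unfolding W11_loc_deriv_def by blast
  then show ?thesis
    using set_borel_integral_eq_integral(2)[OF W11_loc_deriv_set_integrable[OF W order_refl]]
    by simp
qed

lemma W11_loc_deriv_increment:
  assumes W: "W11_loc_deriv y g" and "0 \<le> s" "s \<le> t"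
  shows "y t - y s = (LINT x:{s..t}|lborel. g x)"
proof -
  note integrable = set_borel_integral_eq_integral[OF W11_loc_deriv_set_integrable[OF W]]
  have "integral {0..s} g + integral {s..t} g = integral {0..t} g"
    using Henstock_Kurzweil_Integration.integral_combine[OF assms(2,3) integrable(1)[OF order_refl]]
    by simp
  moreover have "y s = y 0 + integral {0..s} g"
    using W11_loc_deriv_eq_integral[OF W assms(2)] .
  moreover have "y t = y 0 + integral {0..t} g"
    by (rule W11_loc_deriv_eq_integral[OF W]) (use assms in linarith)
  moreover have "(LINT x:{s..t}|lborel. g x) = integral {s..t} g"
    using integrable(2) assms(2) .
  ultimately show ?thesis by linarith
qed

lemma W11_loc_deriv_continuous_on:
  assumes W: "W11_loc_deriv y g"
  shows "continuous_on {0..b} y"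
proof -
  have "continuous_on {0..b} (\<lambda>x. y 0 + integral {0..x} g)"
    using set_borel_integral_eq_integral(1)[OF W11_loc_deriv_set_integrable[OF W]]
    by (intro continuous_intros indefinite_integral_continuous_1) auto
  moreover have "y x = y 0 + integral {0..x} g" if "x \<in> {0..b}" for x
    by (rule W11_loc_deriv_eq_integral[OF W]) (use that in auto)
  ultimately show ?thesis
    using continuous_on_cong by (metis (no_types, lifting))
qed

lemma W11_loc_deriv_increment_le:
  assumes W: "W11_loc_deriv y g" and "0 \<le> a" "a \<le> b"
    and z: "continuous_on {a..b} z" and z': "continuous_on {a..b} z'"
    and deriv: "\<And>x. x \<in> {a<..<b} \<Longrightarrow> (z has_real_derivative z' x) (at x)"
    and le: "AE x in lborel. x \<in> {a<..<b} \<longrightarrow> g x \<le> z' x"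
  shows "y b - y a \<le> z b - z a"
proof -
  have z'_integrable: "set_integrable lborel {a..b} z'"
    using z' by (rule borel_integrable_atLeastAtMost')
  have "(z' has_integral (z b - z a)) {a..b}"
    using assms by (intro fundamental_theorem_of_calculus_interior)
                   (auto simp: has_real_derivative_iff_has_vector_derivative)
  then have z_increment: "(LINT x:{a..b}|lborel. z' x) = z b - z a"
    using set_borel_integral_eq_integral(2)[OF z'_integrable] by (simp add: integral_unique)
  have "AE x\<in>{a..b} in lborel. g x \<le> z' x"
    using le AE_lborel_singleton[of a] AE_lborel_singleton[of b] by eventually_elim auto
  then have "(LINT x:{a..b}|lborel. g x) \<le> (LINT x:{a..b}|lborel. z' x)"
    using W11_loc_deriv_set_integrable[OF W \<open>0 \<le> a\<close>] z'_integrable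
    by (intro set_integral_mono_AE)
  then show ?thesis
    using W11_loc_deriv_increment[OF assms(1-3)] z_increment by simp
qed

lemma W11_loc_deriv_antimono:
  assumes W: "W11_loc_deriv y g" and "0 \<le> a" "a \<le> b"
    and "AE x in lborel. x \<in> {a<..<b} \<longrightarrow> g x \<le> 0"
  shows "y b \<le> y a"
  using W11_loc_deriv_increment_le[OF assms(1-3), of "\<lambda>_. 0" "\<lambda>_. 0"] assms(4) by simp

lemma last_nonpos_point:
  fixes f :: "real \<Rightarrow> real"
  assumes "continuous_on {a..b} f" "a \<le> b" "f a \<le> 0"
  obtains c where "a \<le> c" "c \<le> b" "f c \<le> 0" "\<And>x. c < x \<Longrightarrow> x \<le> b \<Longrightarrow> 0 < f x"
proof -
  define S where "S = {a..b} \<inter> f -` {..0}"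
  have "closed S"
    unfolding S_def using assms(1) by (intro continuous_closed_preimage) auto
  moreover have "a \<in> S" "bdd_above S"
    unfolding S_def using assms(2,3) by auto
  ultimately have "Sup S \<in> S"
    by (intro closed_contains_Sup) auto
  moreover have "0 < f x" if "Sup S < x" "x \<le> b" for x
  proof (rule ccontr)
    assume "\<not> 0 < f x"
    then have "x \<in> S" using that \<open>Sup S \<in> S\<close> by (auto simp: S_def)
    then have "x \<le> Sup S" using \<open>bdd_above S\<close> by (rule cSup_upper)
    then show False using that by simp
  qed
  ultimately show ?thesis
    using that unfolding S_def by auto
qed

lemma W11_loc_deriv_comparison:
  fixes F h :: "real \<Rightarrow> real"
  assumes W: "W11_loc_deriv y g" and "0 \<le> a" "a \<le> t" "t \<le> b"
    and F: "mono_on {0..} F"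
    and z: "continuous_on {a..b} z" and z': "continuous_on {a..b} z'"
    and deriv: "\<And>x. x \<in> {a<..<b} \<Longrightarrow> (z has_real_derivative z' x) (at x)"
    and z_nonneg: "\<And>x. x \<in> {a<..<b} \<Longrightarrow> 0 \<le> z x"
    and supersolution: "\<And>x. x \<in> {a<..<b} \<Longrightarrow> h x \<le> z' x + F (z x)"
    and subsolution: "AE x in lborel. x \<in> {a<..<b} \<longrightarrow> g x + F (y x) \<le> h x"
    and initial: "y a \<le> z a"
  shows "y t \<le> z t"
proof (rule ccontr)
  assume "\<not> y t \<le> z t"
  have "continuous_on {a..t} y"
    using W11_loc_deriv_continuous_on[OF W, of t]
    by (rule continuous_on_subset) (use assms(2) in auto)
  moreover have "continuous_on {a..t} z"
    using z by (rule continuous_on_subset) (use assms(4) in auto)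
  ultimately have "continuous_on {a..t} (\<lambda>s. y s - z s)"
    by (intro continuous_intros)
  then obtain t0 where t0: "a \<le> t0" "t0 \<le> t" "y t0 \<le> z t0"
    and above: "\<And>x. t0 < x \<Longrightarrow> x \<le> t \<Longrightarrow> z x < y x"
    using last_nonpos_point[of a t "\<lambda>s. y s - z s"] assms(3) initial by auto
  have "AE x in lborel. x \<in> {t0<..<t} \<longrightarrow> g x \<le> z' x"
    using subsolution
  proof (rule AE_mp, intro AE_I2 impI)
    fix x assume x: "x \<in> {t0<..<t}"
    then have x_ab: "x \<in> {a<..<b}" using t0 assms(4) by auto
    assume "x \<in> {a<..<b} \<longrightarrow> g x + F (y x) \<le> h x"
    moreover have "F (z x) \<le> F (y x)"
      using above[of x] x z_nonneg[OF x_ab] by (intro mono_onD[OF F]) auto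
    ultimately show "g x \<le> z' x"
      using x_ab supersolution[OF x_ab] by linarith
  qed
  moreover have "{t0..t} \<subseteq> {a..b}" "{t0<..<t} \<subseteq> {a<..<b}"
    using t0 assms(4) by auto
  ultimately have "y t - y t0 \<le> z t - z t0"
    using t0 assms(2)
    by (intro W11_loc_deriv_increment_le[OF W, where z' = z'] deriv
          continuous_on_subset[OF z] continuous_on_subset[OF z']) auto
  then show False using \<open>\<not> y t \<le> z t\<close> t0 by simp
qed

lemma barrier_coefficient_eq:
  fixes \<alpha> \<delta> :: real
  assumes "0 < \<delta>" "\<delta> < 1" "0 < \<alpha>"
  shows "\<alpha> * (1 - \<delta>) * (\<alpha> * \<delta> * (1 - \<delta>)) powr (\<delta> / (1 - \<delta>))
           = (\<alpha> * \<delta> powr \<delta> * (1 - \<delta>)) powr (1 / (1 - \<delta>))"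
proof -
  define p where "p = \<delta> / (1 - \<delta>)"
  have q: "1 / (1 - \<delta>) = 1 + p" and \<delta>q: "\<delta> * (1 + p) = p"
    using assms unfolding p_def by (simp_all add: field_simps)
  have "(\<alpha> * \<delta> powr \<delta> * (1 - \<delta>)) powr (1 + p)
          = \<alpha> powr (1 + p) * \<delta> powr (\<delta> * (1 + p)) * (1 - \<delta>) powr (1 + p)"
    using assms by (simp add: powr_mult powr_powr)
  also have "\<dots> = \<alpha> * (1 - \<delta>) * (\<alpha> powr p * \<delta> powr p * (1 - \<delta>) powr p)"
    using assms by (simp add: \<delta>q powr_add)
  also have "\<dots> = \<alpha> * (1 - \<delta>) * (\<alpha> * \<delta> * (1 - \<delta>)) powr p"
    using assms by (simp add: powr_mult)
  finally show ?thesis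
    unfolding q p_def by simp
qed

definition barrier :: "real \<Rightarrow> real \<Rightarrow> real \<Rightarrow> real \<Rightarrow> real" where
  "barrier \<alpha> \<delta> T0 t = (\<alpha> * \<delta> * (1 - \<delta>) * (T0 - t)) powr (1 / (1 - \<delta>))"

definition barrier_deriv :: "real \<Rightarrow> real \<Rightarrow> real \<Rightarrow> real \<Rightarrow> real" where
  "barrier_deriv \<alpha> \<delta> T0 t = - \<alpha> * \<delta> * (\<alpha> * \<delta> * (1 - \<delta>) * (T0 - t)) powr (\<delta> / (1 - \<delta>))"

context
  fixes \<alpha> \<delta> T0 :: real
  assumes \<delta>: "0 < \<delta>" "\<delta> < 1" and \<alpha>: "0 < \<alpha>"
begin

lemma continuous_on_barrier: "continuous_on {..T0} (barrier \<alpha> \<delta> T0)"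
  unfolding barrier_def using \<delta> \<alpha>
  by (intro continuous_intros continuous_on_powr') (auto simp: mult_nonneg_nonneg)

lemma continuous_on_barrier_deriv: "continuous_on {..T0} (barrier_deriv \<alpha> \<delta> T0)"
  unfolding barrier_deriv_def using \<delta> \<alpha>
  by (intro continuous_intros continuous_on_powr') (auto simp: mult_nonneg_nonneg)

lemma has_real_derivative_barrier:
  assumes "t < T0"
  shows "(barrier \<alpha> \<delta> T0 has_real_derivative barrier_deriv \<alpha> \<delta> T0 t) (at t)"
proof -
  define K where "K = \<alpha> * \<delta> * (1 - \<delta>)"
  have "((\<lambda>t. K * (T0 - t)) has_real_derivative - K) (at t)"
    by (auto intro!: derivative_eq_intros)
  moreover have "0 < K * (T0 - t)"
    using \<delta> \<alpha> assms unfolding K_def by simp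
  ultimately have "((\<lambda>t. (K * (T0 - t)) powr (1 / (1 - \<delta>))) has_real_derivative
      1 / (1 - \<delta>) * (K * (T0 - t)) powr (1 / (1 - \<delta>) - 1) * - K) (at t)"
    using DERIV_fun_powr[of "\<lambda>t. K * (T0 - t)" "- K" t "1 / (1 - \<delta>)"] by simp
  moreover have "1 / (1 - \<delta>) * (K * (T0 - t)) powr (1 / (1 - \<delta>) - 1) * - K
      = barrier_deriv \<alpha> \<delta> T0 t"
  proof -
    have "1 / (1 - \<delta>) - 1 = \<delta> / (1 - \<delta>)" "1 / (1 - \<delta>) * - K = - \<alpha> * \<delta>"
      using \<delta> unfolding K_def by (simp_all add: field_simps)
    then show ?thesis
      unfolding barrier_deriv_def K_def[symmetric] by (metis mult.commute mult.assoc)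
  qed
  ultimately show ?thesis
    unfolding barrier_def K_def[symmetric] by simp
qed

lemma barrier_equation:
  assumes "t \<le> T0"
  shows "barrier_deriv \<alpha> \<delta> T0 t + \<alpha> * barrier \<alpha> \<delta> T0 t powr \<delta>
           = (\<alpha> * \<delta> powr \<delta> * (1 - \<delta>)) powr (1 / (1 - \<delta>)) * (T0 - t) powr (\<delta> / (1 - \<delta>))"
proof -
  define K where "K = \<alpha> * \<delta> * (1 - \<delta>)"
  have "0 \<le> K" "0 \<le> T0 - t"
    using \<delta> \<alpha> assms unfolding K_def by simp_all
  have power: "(K * (T0 - t)) powr (\<delta> / (1 - \<delta>))
      = K powr (\<delta> / (1 - \<delta>)) * (T0 - t) powr (\<delta> / (1 - \<delta>))"
    using \<open>0 \<le> K\<close> \<open>0 \<le> T0 - t\<close> by (simp add: powr_mult)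
  have "barrier \<alpha> \<delta> T0 t powr \<delta> = (K * (T0 - t)) powr (\<delta> / (1 - \<delta>))"
    unfolding barrier_def K_def[symmetric] by (simp add: powr_powr)
  then have "barrier_deriv \<alpha> \<delta> T0 t + \<alpha> * barrier \<alpha> \<delta> T0 t powr \<delta>
      = \<alpha> * (1 - \<delta>) * K powr (\<delta> / (1 - \<delta>)) * (T0 - t) powr (\<delta> / (1 - \<delta>))"
    unfolding barrier_deriv_def K_def[symmetric] power by (simp add: algebra_simps)
  then show ?thesis
    unfolding K_def using barrier_coefficient_eq[OF \<delta> \<alpha>] by simp
qed

lemma W11_loc_deriv_le_barrier:
  assumes W: "W11_loc_deriv y g" and "0 \<le> t" "t \<le> T0"
    and initial: "y 0 \<le> barrier \<alpha> \<delta> T0 0"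
    and subsolution: "AE s in lborel. 0 < s \<longrightarrow>
           g s + \<alpha> * y s powr \<delta>
             \<le> (\<alpha> * \<delta> powr \<delta> * (1 - \<delta>)) powr (1 / (1 - \<delta>))
                * (max (T0 - s) 0) powr (\<delta> / (1 - \<delta>))"
  shows "y t \<le> barrier \<alpha> \<delta> T0 t"
proof -
  have subsolution_before_T0: "AE s in lborel. s \<in> {0<..<T0} \<longrightarrow> g s + \<alpha> * y s powr \<delta>
      \<le> (\<alpha> * \<delta> powr \<delta> * (1 - \<delta>)) powr (1 / (1 - \<delta>)) * (T0 - s) powr (\<delta> / (1 - \<delta>))"
    using subsolution
  proof (rule AE_mp, intro AE_I2 impI)
    fix s assume "s \<in> {0<..<T0}"
    then have "0 < s" "max (T0 - s) 0 = T0 - s" by auto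
    moreover assume "0 < s \<longrightarrow> g s + \<alpha> * y s powr \<delta>
        \<le> (\<alpha> * \<delta> powr \<delta> * (1 - \<delta>)) powr (1 / (1 - \<delta>)) * max (T0 - s) 0 powr (\<delta> / (1 - \<delta>))"
    ultimately show "g s + \<alpha> * y s powr \<delta>
        \<le> (\<alpha> * \<delta> powr \<delta> * (1 - \<delta>)) powr (1 / (1 - \<delta>)) * (T0 - s) powr (\<delta> / (1 - \<delta>))"
      by (simp only:)
  qed
  have "mono_on {0..} (\<lambda>x. \<alpha> * x powr \<delta>)"
    using \<delta> \<alpha> by (intro mono_onI) (auto intro: powr_mono2)
  moreover have "continuous_on {0..T0} (barrier \<alpha> \<delta> T0)"
    using continuous_on_barrier by (rule continuous_on_subset) auto
  moreover have "continuous_on {0..T0} (barrier_deriv \<alpha> \<delta> T0)"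
    using continuous_on_barrier_deriv by (rule continuous_on_subset) auto
  moreover have "(barrier \<alpha> \<delta> T0 has_real_derivative barrier_deriv \<alpha> \<delta> T0 s) (at s)"
    if "s \<in> {0<..<T0}" for s
    using has_real_derivative_barrier that by simp
  moreover have "0 \<le> barrier \<alpha> \<delta> T0 s" for s
    unfolding barrier_def by simp
  moreover have "(\<alpha> * \<delta> powr \<delta> * (1 - \<delta>)) powr (1 / (1 - \<delta>)) * (T0 - s) powr (\<delta> / (1 - \<delta>))
      \<le> barrier_deriv \<alpha> \<delta> T0 s + \<alpha> * barrier \<alpha> \<delta> T0 s powr \<delta>"
    if "s \<in> {0<..<T0}" for s
    using barrier_equation[of s] that by simp
  ultimately show ?thesis
    using subsolution_before_T0 initial
    by (rule W11_loc_deriv_comparison[OF W order_refl assms(2,3)])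
qed

end

theorem lemma5p2:
  fixes y g :: "real \<Rightarrow> real" and \<delta> \<alpha> T0 :: real
  assumes "W11_loc_deriv y g"
    and "\<forall>t\<ge>0. y t \<ge> 0"
    and "0 < \<delta>" "\<delta> < 1" "0 < \<alpha>" "0 < T0"
    and "y 0 \<le> (\<alpha> * \<delta> * (1 - \<delta>) * T0) powr (1 / (1 - \<delta>))"
    and "AE t in lborel. t > 0 \<longrightarrow>
           g t + \<alpha> * y t powr \<delta>
             \<le> (\<alpha> * \<delta> powr \<delta> * (1 - \<delta>)) powr (1 / (1 - \<delta>))
                * (max (T0 - t) 0) powr (\<delta> / (1 - \<delta>))"
  shows "\<forall>t\<ge>T0. y t = 0"
proof (intro allI impI antisym)
  fix t assume "T0 \<le> t"
  have "y 0 \<le> barrier \<alpha> \<delta> T0 0"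
    using assms(7) by (simp add: barrier_def)
  then have "y T0 \<le> barrier \<alpha> \<delta> T0 T0"
    using W11_loc_deriv_le_barrier[OF assms(3-5,1) less_imp_le[OF assms(6)] order_refl] assms(8)
    by blast
  then have "y T0 \<le> 0"
    by (simp add: barrier_def)
  moreover have "AE s in lborel. s \<in> {T0<..<t} \<longrightarrow> g s \<le> 0"
    using assms(8)
  proof (rule AE_mp, intro AE_I2 impI)
    fix s assume "s \<in> {T0<..<t}"
    moreover assume "0 < s \<longrightarrow> g s + \<alpha> * y s powr \<delta>
        \<le> (\<alpha> * \<delta> powr \<delta> * (1 - \<delta>)) powr (1 / (1 - \<delta>)) * max (T0 - s) 0 powr (\<delta> / (1 - \<delta>))"
    ultimately have "g s + \<alpha> * y s powr \<delta> \<le> 0"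
      using assms(6) by simp
    moreover have "0 \<le> \<alpha> * y s powr \<delta>"
      using assms(5) by simp
    ultimately show "g s \<le> 0" by linarith
  qed
  then have "y t \<le> y T0"
    using assms(6) \<open>T0 \<le> t\<close> by (intro W11_loc_deriv_antimono[OF assms(1)]) auto
  ultimately show "y t \<le> 0" by simp
  show "0 \<le> y t"
    using assms(2,6) \<open>T0 \<le> t\<close> by simp
qed

end
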